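(* Let $N$ be the set of the 24 neutral triads $\{x,x+7,x+14\}\subset\mathbb{Z}_{24}$, $x\in\mathbb{Z}_{24}$. The map $L:N\to N$, $L\langle x,x+7,x+14\rangle=I_{2x+21}\langle x,x+7,x+14\rangle$ (where $I_n(y)=-y+n$ mod 24 componentwise), generates a cyclic group of permutations of $N$ isomorphic to $\mathbb{Z}_{24}$.
   Context: A neutral triad with root $x$ is written $\langle x,x+7,x+14\rangle$; in general the Leading Tone Exchange function is $L\langle y_1,y_2,y_3\rangle=I_{y_2+y_3}\langle y_1,y_2,y_3\rangle$, which on neutral triads gives the formula above. Triads are compared as unordered subsets of $\mathbb{Z}_{24}$. *)

theory Defs
  imports "HOL-Algebra.Bij" "HOL-Algebra.Elementary_Groups"
begin

text \<open>Z_24 is represented by the integers 0..23; arithmetic is taken mod 24.\<close>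

definition neutral_triad :: "int \<Rightarrow> int set" where
  "neutral_triad x = {x mod 24, (x + 7) mod 24, (x + 14) mod 24}"

definition neutral_triads :: "int set set" where
  "neutral_triads = neutral_triad ` {0..<24}"

definition inv24 :: "int \<Rightarrow> int \<Rightarrow> int" where
  "inv24 n y = (- y + n) mod 24"

definition triad_root :: "int set \<Rightarrow> int" where
  "triad_root T = (THE x. x \<in> {0..<24} \<and> T = neutral_triad x)"

definition LT :: "int set \<Rightarrow> int set" where
  "LT T = inv24 (2 * triad_root T + 21) ` T"

end

theory Submission
  imports Defs "HOL-Algebra.Multiplicative_Group"
begin

text \<open>The reflection \<open>I\<^bsub>2x+21\<^esub>\<close> sends x, x + 7, x + 14 to x + 21, x + 14, x + 7, so L maps the
  neutral triad with root x to the one with root x + 7: on roots it is translation by 7 in Z/24.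
  As 7 is prime to 24, this permutation has order 24, and the subgroup generated by an element
  of order n is isomorphic to Z/n.\<close>

lemma mod_integer_mod_group:
  "k \<in> carrier (integer_mod_group n) \<Longrightarrow> k mod int n = k"
  by (simp add: carrier_integer_mod_group split: if_splits)

lemma mod_in_carrier_integer_mod_group:
  "k mod int n \<in> carrier (integer_mod_group n)"
  by (simp add: carrier_integer_mod_group)

lemma (in group) subgroup_generated_singleton_iso_integer_mod_group:
  assumes "x \<in> carrier G"
  shows "subgroup_generated G {x} \<cong> integer_mod_group (ord x)"
proof -
  have pow_eq_iff: "x [^] k = x [^] l \<longleftrightarrow> k mod int (ord x) = l mod int (ord x)" for k l
    using assms by (simp add: int_pow_eq mod_eq_dvd_iff dvd_diff_commute)
  have pow_mod: "x [^] (k mod int (ord x)) = x [^] k" for k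
    by (simp add: pow_eq_iff)
  have carrier_gen: "carrier (subgroup_generated G {x}) = range (\<lambda>k::int. x [^] k)"
    using assms by (auto simp: carrier_subgroup_generated generate_pow)
  have "(\<lambda>k. x [^] k) \<in> iso (integer_mod_group (ord x)) (subgroup_generated G {x})"
  proof (rule isoI)
    show "(\<lambda>k. x [^] k) \<in> hom (integer_mod_group (ord x)) (subgroup_generated G {x})"
      using assms by (intro homI) (auto simp: carrier_gen pow_mod int_pow_mult)
    show "bij_betw (\<lambda>k. x [^] k) (carrier (integer_mod_group (ord x))) (carrier (subgroup_generated G {x}))"
    proof (rule bij_betw_imageI)
      show "inj_on (\<lambda>k. x [^] k) (carrier (integer_mod_group (ord x)))"
        by (intro inj_onI) (metis pow_eq_iff mod_integer_mod_group)
      show "(\<lambda>k. x [^] k) ` carrier (integer_mod_group (ord x)) = carrier (subgroup_generated G {x})"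
        unfolding carrier_gen
        by (auto simp: image_iff) (metis pow_mod mod_in_carrier_integer_mod_group)
    qed
  qed
  then show ?thesis
    by (simp add: is_isoI group.iso_sym)
qed

lemma carrier_BijGroup: "carrier (BijGroup S) = Bij S"
  by (simp add: BijGroup_def)

lemma Bij_BijGroup_pow:
  "f \<in> Bij S \<Longrightarrow> f [^]\<^bsub>BijGroup S\<^esub> (n::nat) \<in> Bij S"
  using monoid.nat_pow_closed [OF group.is_monoid [OF group_BijGroup]]
  by (metis carrier_BijGroup)

lemma mult_BijGroup:
  "f \<in> Bij S \<Longrightarrow> g \<in> Bij S \<Longrightarrow> f \<otimes>\<^bsub>BijGroup S\<^esub> g = compose S f g"
  by (simp add: BijGroup_def)

lemma one_BijGroup: "\<one>\<^bsub>BijGroup S\<^esub> = (\<lambda>x\<in>S. x)"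
  by (simp add: BijGroup_def)

lemma BijGroup_pow_apply:
  assumes "f \<in> Bij S" "x \<in> S"
  shows "(f [^]\<^bsub>BijGroup S\<^esub> (n::nat)) x = (f ^^ n) x"
  using assms(2)
proof (induction n arbitrary: x)
  case 0
  then show ?case by (simp add: one_BijGroup)
next
  case (Suc n)
  have "f x \<in> S"
    using assms(1) Suc.prems Bij_imp_funcset by blast
  then show ?case
    using assms(1) Suc
    by (simp add: mult_BijGroup Bij_BijGroup_pow compose_def funpow_swap1)
qed

lemma BijGroup_pow_eq_one_iff:
  assumes "f \<in> Bij S"
  shows "f [^]\<^bsub>BijGroup S\<^esub> (n::nat) = \<one>\<^bsub>BijGroup S\<^esub> \<longleftrightarrow> (\<forall>x\<in>S. (f ^^ n) x = x)"
proof
  assume "f [^]\<^bsub>BijGroup S\<^esub> n = \<one>\<^bsub>BijGroup S\<^esub>"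
  then show "\<forall>x\<in>S. (f ^^ n) x = x"
    using assms by (simp flip: BijGroup_pow_apply add: one_BijGroup)
next
  assume fixes_S: "\<forall>x\<in>S. (f ^^ n) x = x"
  show "f [^]\<^bsub>BijGroup S\<^esub> n = \<one>\<^bsub>BijGroup S\<^esub>"
    unfolding one_BijGroup
  proof (rule extensionalityI)
    show "f [^]\<^bsub>BijGroup S\<^esub> n \<in> extensional S"
      using assms by (simp add: Bij_BijGroup_pow Bij_imp_extensional)
  qed (simp_all add: assms fixes_S BijGroup_pow_apply)
qed

lemma neutral_triad_mod: "neutral_triad (x mod 24) = neutral_triad x"
  by (simp add: neutral_triad_def mod_add_left_eq)

lemma plus_21_notin_neutral_triad: "(x + 21) mod 24 \<notin> neutral_triad x"
  by (simp add: neutral_triad_def mod_eq_dvd_iff)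

lemma neutral_triad_eq_iff: "neutral_triad x = neutral_triad y \<longleftrightarrow> x mod 24 = y mod 24"
proof
  assume eq: "neutral_triad x = neutral_triad y"
  \<comment> \<open>if x were y + 7 or y + 14 mod 24, the triad of x would contain y + 21\<close>
  have shifted: "x mod 24 \<noteq> (y + c) mod 24" if "c \<in> {7, 14}" for c
  proof
    assume "x mod 24 = (y + c) mod 24"
    then have "(x + (21 - c)) mod 24 = (y + c + (21 - c)) mod 24"
      by (metis mod_add_left_eq)
    then have "(x + (21 - c)) mod 24 = (y + 21) mod 24"
      by simp
    moreover have "(x + (21 - c)) mod 24 \<in> neutral_triad x"
      using that by (auto simp: neutral_triad_def)
    ultimately show False
      using eq plus_21_notin_neutral_triad by metis
  qed
  have "x mod 24 \<in> neutral_triad y"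
    using eq by (metis insertI1 neutral_triad_def)
  then show "x mod 24 = y mod 24"
    using shifted[of 7] shifted[of 14] by (simp add: neutral_triad_def)
qed (metis neutral_triad_mod)

lemma triad_root_neutral_triad: "triad_root (neutral_triad x) = x mod 24"
  unfolding triad_root_def by (rule the_equality) (auto simp: neutral_triad_eq_iff)

lemma neutral_triads_eq_range: "neutral_triads = range neutral_triad"
proof -
  have "neutral_triad x \<in> neutral_triad ` {0..<24}" for x
    by (rule image_eqI [where x = "x mod 24"]) (simp_all add: neutral_triad_mod)
  then show ?thesis
    unfolding neutral_triads_def by auto
qed

lemma LT_neutral_triad: "LT (neutral_triad x) = neutral_triad (x + 7)"
proof -
  have reflect: "inv24 (2 * (x mod 24) + 21) ((x + c) mod 24) = (x + (21 - c)) mod 24" for c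
  proof -
    have "- ((x + c) mod 24) + (2 * (x mod 24) + 21)
        = x + (21 - c) + 24 * ((x + c) div 24 - 2 * (x div 24))"
      by (simp add: minus_mult_div_eq_mod [symmetric] algebra_simps)
    then show ?thesis
      unfolding inv24_def by (metis mod_mult_self2)
  qed
  have "LT (neutral_triad x) = {(x + 21) mod 24, (x + 14) mod 24, (x + 7) mod 24}"
    unfolding LT_def triad_root_neutral_triad
    using reflect[of 0] reflect[of 7] reflect[of 14] by (simp add: neutral_triad_def)
  then show ?thesis
    by (auto simp: neutral_triad_def add.assoc)
qed

lemma ball_neutral_triads: "(\<forall>T\<in>neutral_triads. P T) \<longleftrightarrow> (\<forall>x. P (neutral_triad x))"
  by (simp add: neutral_triads_eq_range)

lemma restrict_LT_Bij: "restrict LT neutral_triads \<in> Bij neutral_triads"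
proof -
  have "inj_on LT neutral_triads"
  proof (rule inj_onI)
    fix T T' assume "T \<in> neutral_triads" "T' \<in> neutral_triads" and eq: "LT T = LT T'"
    then obtain x y where "T = neutral_triad x" "T' = neutral_triad y"
      by (auto simp: neutral_triads_eq_range)
    with eq show "T = T'"
      by (simp add: LT_neutral_triad neutral_triad_eq_iff mod_eq_dvd_iff)
  qed
  moreover have "LT ` neutral_triads = neutral_triads"
    unfolding neutral_triads_eq_range
  proof
    show "LT ` range neutral_triad \<subseteq> range neutral_triad"
      by (auto simp: LT_neutral_triad)
    have "neutral_triad x = LT (neutral_triad (x - 7))" for x
      by (simp add: LT_neutral_triad)
    then show "range neutral_triad \<subseteq> LT ` range neutral_triad"
      by (metis image_eqI rangeI image_subsetI)
  qed
  ultimately show ?thesis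
    by (simp add: Bij_def bij_betw_def)
qed

lemma funpow_restrict_LT_neutral_triad:
  "(restrict LT neutral_triads ^^ n) (neutral_triad x) = neutral_triad (x + 7 * int n)"
  by (induction n) (simp_all add: neutral_triads_eq_range LT_neutral_triad algebra_simps)

lemma ord_restrict_LT: "group.ord (BijGroup neutral_triads) (restrict LT neutral_triads) = 24"
proof -
  have fixes_iff: "(\<forall>T\<in>neutral_triads. (restrict LT neutral_triads ^^ n) T = T) \<longleftrightarrow> 24 dvd n" for n
  proof -
    have "(\<forall>T\<in>neutral_triads. (restrict LT neutral_triads ^^ n) T = T)
        \<longleftrightarrow> (\<forall>x. (x + 7 * int n) mod 24 = x mod 24)"
      by (simp only: ball_neutral_triads funpow_restrict_LT_neutral_triad neutral_triad_eq_iff)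
    \<comment> \<open>7 is a unit mod 24\<close>
    also have "\<dots> \<longleftrightarrow> 24 dvd n"
      by (simp add: mod_eq_dvd_iff) presburger
    finally show ?thesis .
  qed
  show ?thesis
    using restrict_LT_Bij
    by (simp add: group.ord_unique [OF group_BijGroup] carrier_BijGroup BijGroup_pow_eq_one_iff
        fixes_iff)
qed

theorem mainTheorem6:
  shows "restrict LT neutral_triads \<in> carrier (BijGroup neutral_triads) \<and>
         subgroup_generated (BijGroup neutral_triads) {restrict LT neutral_triads}
           \<cong> integer_mod_group 24"
proof
  show LT_carrier: "restrict LT neutral_triads \<in> carrier (BijGroup neutral_triads)"
    using restrict_LT_Bij by (simp add: carrier_BijGroup)
  show "subgroup_generated (BijGroup neutral_triads) {restrict LT neutral_triads}
          \<cong> integer_mod_group 24"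
    using group.subgroup_generated_singleton_iso_integer_mod_group [OF group_BijGroup LT_carrier]
    by (simp only: ord_restrict_LT)
qed

end
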